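(* Let $G=([n],E)$ be an oriented graph with $|\mathcal{P}(G)|\ge 1$ and associated poset $P=([n],\le_G)$. If $\dim P\ge 3$, then \[\max_{\sigma,\rho\in\mathcal{P}(G)} d_K(\sigma,\rho)<|I(P)|.\]
   Context: Write a permutation $\sigma\in S_n$ as $\sigma=\sigma_1\cdots\sigma_n$. A permutation $\sigma$ satisfies an oriented graph $G=([n],E)$ if $\sigma_u>\sigma_v$ for every oriented edge $u\to v\in E$; $\mathcal{P}(G)$ is the set of permutations satisfying $G$. Write $u\rightsquigarrow v$ if there is an oriented path from $u$ to $v$ in $G$. The poset $P=([n],\le_G)$ is defined by $a\le_G b$ iff $a\rightsquigarrow b$ or $a=b$. The dimension $\dim P$ is the smallest number of total orders on $[n]$ whose intersection is $\le_G$. $I(P)=\{(i,j): i<j,\ i\not\rightsquigarrow j,\ j\not\rightsquigarrow i\}$. For $\sigma,\rho\in S_n$, a pair $i<j$ is discordant if $(\sigma_i-\sigma_j)(\rho_i-\rho_j)<0$; $d_K(\sigma,\rho)$ is the number of discordant pairs. *)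

theory Defs
  imports "HOL-Combinatorics.Permutations"
begin

definition oriented_graph :: "nat \<Rightarrow> (nat \<times> nat) set \<Rightarrow> bool" where
  "oriented_graph n E \<longleftrightarrow> E \<subseteq> {1..n} \<times> {1..n}
     \<and> (\<forall>u. (u, u) \<notin> E) \<and> (\<forall>u v. (u, v) \<in> E \<longrightarrow> (v, u) \<notin> E)"

definition satisfying_perms :: "nat \<Rightarrow> (nat \<times> nat) set \<Rightarrow> (nat \<Rightarrow> nat) set" where
  "satisfying_perms n E = {\<sigma>. \<sigma> permutes {1..n} \<and> (\<forall>(u, v) \<in> E. \<sigma> u > \<sigma> v)}"

definition poset_le :: "nat \<Rightarrow> (nat \<times> nat) set \<Rightarrow> (nat \<times> nat) set" where
  "poset_le n E = {(a, b). a \<in> {1..n} \<and> b \<in> {1..n} \<and> (a = b \<or> (a, b) \<in> E\<^sup>+)}"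

definition order_dim :: "'a set \<Rightarrow> 'a rel \<Rightarrow> nat" where
  "order_dim A r = (LEAST k. \<exists>\<R>. finite \<R> \<and> card \<R> = k \<and>
      (\<forall>L \<in> \<R>. linear_order_on A L) \<and> \<Inter>\<R> = r)"

definition incomp_pairs :: "nat \<Rightarrow> (nat \<times> nat) set \<Rightarrow> (nat \<times> nat) set" where
  "incomp_pairs n E = {(i, j). i \<in> {1..n} \<and> j \<in> {1..n} \<and> i < j
      \<and> (i, j) \<notin> E\<^sup>+ \<and> (j, i) \<notin> E\<^sup>+}"

definition kendall_dist :: "nat \<Rightarrow> (nat \<Rightarrow> nat) \<Rightarrow> (nat \<Rightarrow> nat) \<Rightarrow> nat" where
  "kendall_dist n \<sigma> \<rho> = card {(i, j). i \<in> {1..n} \<and> j \<in> {1..n} \<and> i < j \<and>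
      (int (\<sigma> i) - int (\<sigma> j)) * (int (\<rho> i) - int (\<rho> j)) < 0}"

end

theory Submission
  imports Defs
begin

text \<open>Every satisfying permutation is a linear extension of the poset, so a pair on which two of
  them disagree is incomparable: the Kendall distance is at most the number of incomparable
  pairs. If equality held, the two permutations would reverse each other on every incomparable
  pair while agreeing on every comparable one; their two linear orders would then intersect to
  exactly the poset order, forcing dimension at most 2.\<close>

lemma diff_mult_diff_neg_iff:
  "(int a - int b) * (int c - int d) < 0 \<longleftrightarrow> (a < b \<and> d < c) \<or> (b < a \<and> c < d)"
  by (auto simp: mult_less_0_iff)

lemma satisfying_perms_trancl_less:
  assumes "\<sigma> \<in> satisfying_perms n E" and "(a, b) \<in> E\<^sup>+"
  shows "\<sigma> b < \<sigma> a"
  using assms(2)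
proof (induction rule: trancl_induct)
  case (base y)
  then show ?case using assms(1) by (auto simp: satisfying_perms_def)
next
  case (step y z)
  then show ?case using assms(1) by (fastforce simp: satisfying_perms_def)
qed

definition discordant_pairs :: "nat \<Rightarrow> (nat \<Rightarrow> nat) \<Rightarrow> (nat \<Rightarrow> nat) \<Rightarrow> (nat \<times> nat) set" where
  "discordant_pairs n \<sigma> \<rho> = {(i, j). i \<in> {1..n} \<and> j \<in> {1..n} \<and> i < j \<and>
      (int (\<sigma> i) - int (\<sigma> j)) * (int (\<rho> i) - int (\<rho> j)) < 0}"

lemma kendall_dist_eq_card_discordant_pairs:
  "kendall_dist n \<sigma> \<rho> = card (discordant_pairs n \<sigma> \<rho>)"
  unfolding kendall_dist_def discordant_pairs_def ..

lemma finite_incomp_pairs: "finite (incomp_pairs n E)"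
  by (rule finite_subset[of _ "{1..n} \<times> {1..n}"]) (auto simp: incomp_pairs_def)

lemma discordant_pairs_subset_incomp_pairs:
  assumes "\<sigma> \<in> satisfying_perms n E" and "\<rho> \<in> satisfying_perms n E"
  shows "discordant_pairs n \<sigma> \<rho> \<subseteq> incomp_pairs n E"
  using satisfying_perms_trancl_less[OF assms(1)] satisfying_perms_trancl_less[OF assms(2)]
  by (fastforce simp: discordant_pairs_def incomp_pairs_def diff_mult_diff_neg_iff)

lemma kendall_dist_le_card_incomp_pairs:
  assumes "\<sigma> \<in> satisfying_perms n E" and "\<rho> \<in> satisfying_perms n E"
  shows "kendall_dist n \<sigma> \<rho> \<le> card (incomp_pairs n E)"
  unfolding kendall_dist_eq_card_discordant_pairs
  using discordant_pairs_subset_incomp_pairs[OF assms] finite_incomp_pairs by (rule card_mono[rotated])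

definition perm_order :: "nat \<Rightarrow> (nat \<Rightarrow> nat) \<Rightarrow> (nat \<times> nat) set" where
  "perm_order n \<sigma> = {(a, b). a \<in> {1..n} \<and> b \<in> {1..n} \<and> \<sigma> b \<le> \<sigma> a}"

lemma linear_order_on_perm_order:
  assumes "inj_on \<sigma> {1..n}"
  shows "linear_order_on {1..n} (perm_order n \<sigma>)"
  using assms
  unfolding linear_order_on_def partial_order_on_def preorder_on_def refl_on_def trans_def
    antisym_def total_on_def perm_order_def
  by (auto simp: inj_on_eq_iff)

lemma perm_order_Int_eq_poset_le:
  assumes \<sigma>: "\<sigma> \<in> satisfying_perms n E" and \<rho>: "\<rho> \<in> satisfying_perms n E"
    and all_discordant: "incomp_pairs n E \<subseteq> discordant_pairs n \<sigma> \<rho>"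
  shows "perm_order n \<sigma> \<inter> perm_order n \<rho> = poset_le n E"
proof (intro set_eqI iffI)
  fix x assume "x \<in> perm_order n \<sigma> \<inter> perm_order n \<rho>"
  then obtain a b where x: "x = (a, b)" and ab: "a \<in> {1..n}" "b \<in> {1..n}"
    and le: "\<sigma> b \<le> \<sigma> a" "\<rho> b \<le> \<rho> a"
    by (auto simp: perm_order_def)
  show "x \<in> poset_le n E"
  proof (rule ccontr)
    assume "x \<notin> poset_le n E"
    then have ne: "a \<noteq> b" and "(a, b) \<notin> E\<^sup>+"
      using x ab by (auto simp: poset_le_def)
    moreover have "(b, a) \<notin> E\<^sup>+"
      using satisfying_perms_trancl_less[OF \<sigma>] le(1) by force
    ultimately have "(a, b) \<in> incomp_pairs n E \<or> (b, a) \<in> incomp_pairs n E"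
      using ab by (auto simp: incomp_pairs_def)
    then have "(a, b) \<in> discordant_pairs n \<sigma> \<rho> \<or> (b, a) \<in> discordant_pairs n \<sigma> \<rho>"
      using all_discordant by blast
    moreover have "\<sigma> a \<noteq> \<sigma> b"
      using ne ab \<sigma> by (auto simp: satisfying_perms_def dest: permutes_inj inj_onD)
    ultimately show False
      using le by (auto simp: discordant_pairs_def diff_mult_diff_neg_iff)
  qed
next
  fix x assume "x \<in> poset_le n E"
  then obtain a b where x: "x = (a, b)" and ab: "a \<in> {1..n}" "b \<in> {1..n}"
    and "a = b \<or> (a, b) \<in> E\<^sup>+"
    by (auto simp: poset_le_def)
  then have "\<sigma> b \<le> \<sigma> a" "\<rho> b \<le> \<rho> a"
    using satisfying_perms_trancl_less[OF \<sigma>] satisfying_perms_trancl_less[OF \<rho>]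
    by (auto intro: less_imp_le)
  then show "x \<in> perm_order n \<sigma> \<inter> perm_order n \<rho>"
    using x ab by (simp add: perm_order_def)
qed

lemma order_dim_le_card:
  assumes "finite \<R>" and "\<forall>L \<in> \<R>. linear_order_on A L" and "\<Inter>\<R> = r"
  shows "order_dim A r \<le> card \<R>"
  unfolding order_dim_def by (rule Least_le) (use assms in blast)

lemma order_dim_le_2_if_kendall_dist_eq:
  assumes \<sigma>: "\<sigma> \<in> satisfying_perms n E" and \<rho>: "\<rho> \<in> satisfying_perms n E"
    and "kendall_dist n \<sigma> \<rho> = card (incomp_pairs n E)"
  shows "order_dim {1..n} (poset_le n E) \<le> 2"
proof -
  have "discordant_pairs n \<sigma> \<rho> = incomp_pairs n E"
    using card_subset_eq[OF finite_incomp_pairs discordant_pairs_subset_incomp_pairs[OF \<sigma> \<rho>]]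
      assms(3) by (simp add: kendall_dist_eq_card_discordant_pairs)
  then have "\<Inter>{perm_order n \<sigma>, perm_order n \<rho>} = poset_le n E"
    using perm_order_Int_eq_poset_le[OF \<sigma> \<rho>] by simp
  moreover have "\<forall>L \<in> {perm_order n \<sigma>, perm_order n \<rho>}. linear_order_on {1..n} L"
    using \<sigma> \<rho> linear_order_on_perm_order permutes_inj_on
    unfolding satisfying_perms_def by blast
  ultimately have "order_dim {1..n} (poset_le n E) \<le> card {perm_order n \<sigma>, perm_order n \<rho>}"
    by (intro order_dim_le_card) auto
  also have "\<dots> \<le> 2"
    by (simp add: card_insert_le_m1)
  finally show ?thesis .
qed

theorem mainTheorem10:
  fixes n :: nat and E :: "(nat \<times> nat) set"
  assumes "oriented_graph n E"
    and "card (satisfying_perms n E) \<ge> 1"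
    and "order_dim {1..n} (poset_le n E) \<ge> 3"
  shows "Max {kendall_dist n \<sigma> \<rho> | \<sigma> \<rho>. \<sigma> \<in> satisfying_perms n E \<and> \<rho> \<in> satisfying_perms n E}
           < card (incomp_pairs n E)"
proof -
  let ?S = "satisfying_perms n E"
  let ?K = "{kendall_dist n \<sigma> \<rho> | \<sigma> \<rho>. \<sigma> \<in> ?S \<and> \<rho> \<in> ?S}"
  have "card ?S > 0"
    using assms(2) by simp
  then have "finite ?S" "?S \<noteq> {}"
    by (simp_all add: card_gt_0_iff)
  moreover have "?K = (\<lambda>(\<sigma>, \<rho>). kendall_dist n \<sigma> \<rho>) ` (?S \<times> ?S)"
    by auto
  ultimately have "Max ?K \<in> ?K"
    by (intro Max_in) simp_all
  then obtain \<sigma> \<rho> where \<sigma>: "\<sigma> \<in> ?S" and \<rho>: "\<rho> \<in> ?S" and "Max ?K = kendall_dist n \<sigma> \<rho>"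
    by blast
  moreover have "kendall_dist n \<sigma> \<rho> \<noteq> card (incomp_pairs n E)"
    using order_dim_le_2_if_kendall_dist_eq[OF \<sigma> \<rho>] assms(3) by linarith
  ultimately show ?thesis
    using kendall_dist_le_card_incomp_pairs[OF \<sigma> \<rho>] by simp
qed

end
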